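(* Let $G$ be a connected graph with $n$ nodes and $v(0)\in\mathbb R^n$ arbitrary. Then for every $t\ge0$, $$\mathbb E\|v(t)-\bar v\|_1\;\le\;\Big(1-\frac1{2\gamma(G)}\Big)^{t/2}\sqrt n\,\|v(0)-\bar v\|_2 .$$ Furthermore, $$\sup_{\|v(0)\|_2=1}\mathbb E\|v(t)-\bar v\|_1\;\ge\;\Big(1-\frac1{2\gamma(G)}\Big)^{t}.$$
   Context: The averaging process on a finite, undirected, connected graph $G=(V,E)$, $V=\{1,\dots,n\}$: the state vector $v(t)\in\mathbb R^n$, $t=0,1,2,\dots$, starts from a given $v(0)$; at each step $t\ge 1$ an edge $\{i,j\}\in E$ is chosen uniformly at random (independently of all previous choices) and both $v_i$ and $v_j$ are replaced by $(v_i+v_j)/2$, all other coordinates unchanged. $\bar v=(a,\dots,a)^T$ with $a=\frac1n\sum_i v_i(0)$. $L=D-A$ is the graph Laplacian, $\lambda_2(G)$ its second smallest eigenvalue, $\gamma(G)=|E|/\lambda_2(G)$. *)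

theory Defs
  imports "HOL-Probability.Probability_Mass_Function" "Jordan_Normal_Form.Char_Poly"
begin

definition simple_graph :: "nat \<Rightarrow> nat set set \<Rightarrow> bool" where
  "simple_graph n E \<longleftrightarrow> (\<forall>e\<in>E. e \<subseteq> {0..<n} \<and> card e = 2)"

definition connected_graph :: "nat \<Rightarrow> nat set set \<Rightarrow> bool" where
  "connected_graph n E \<longleftrightarrow>
     (\<forall>i<n. \<forall>j<n. (\<lambda>x y. {x, y} \<in> E)\<^sup>*\<^sup>* i j)"

definition degree :: "nat set set \<Rightarrow> nat \<Rightarrow> nat" where
  "degree E i = card {j. {i, j} \<in> E}"

definition laplacian :: "nat \<Rightarrow> nat set set \<Rightarrow> real mat" where
  "laplacian n E = mat n n (\<lambda>(i, j).
      if i = j then real (degree E i) else if {i, j} \<in> E then -1 else 0)"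

text \<open>Eigenvalues of L, counted with algebraic multiplicity, sorted increasingly;
  lambda_2 is the second smallest one.\<close>
definition lambda2 :: "nat \<Rightarrow> nat set set \<Rightarrow> real" where
  "lambda2 n E = sorted_list_of_multiset (proots (char_poly (laplacian n E))) ! 1"

definition gamma :: "nat \<Rightarrow> nat set set \<Rightarrow> real" where
  "gamma n E = real (card E) / lambda2 n E"

definition avg_step :: "nat set \<Rightarrow> (nat \<Rightarrow> real) \<Rightarrow> (nat \<Rightarrow> real)" where
  "avg_step e v = (\<lambda>k. if k \<in> e then (\<Sum>i\<in>e. v i) / 2 else v k)"

primrec avg_process :: "nat set set \<Rightarrow> (nat \<Rightarrow> real) \<Rightarrow> nat \<Rightarrow> (nat \<Rightarrow> real) pmf" where
  "avg_process E v0 0 = return_pmf v0"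
| "avg_process E v0 (Suc t) =
     bind_pmf (avg_process E v0 t) (\<lambda>v. map_pmf (\<lambda>e. avg_step e v) (pmf_of_set E))"

definition mean_val :: "nat \<Rightarrow> (nat \<Rightarrow> real) \<Rightarrow> real" where
  "mean_val n v = (\<Sum>i<n. v i) / real n"

definition norm1 :: "nat \<Rightarrow> (nat \<Rightarrow> real) \<Rightarrow> real" where
  "norm1 n v = (\<Sum>i<n. \<bar>v i\<bar>)"

definition norm2 :: "nat \<Rightarrow> (nat \<Rightarrow> real) \<Rightarrow> real" where
  "norm2 n v = sqrt (\<Sum>i<n. (v i)\<^sup>2)"

definition exp_dev :: "nat \<Rightarrow> nat set set \<Rightarrow> (nat \<Rightarrow> real) \<Rightarrow> nat \<Rightarrow> real" where
  "exp_dev n E v0 t = measure_pmf.expectation (avg_process E v0 t)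
      (\<lambda>v. norm1 n (\<lambda>i. v i - mean_val n v0))"

end

theory Submission
  imports Defs
begin

(*
  Write L for the Laplacian, \<lambda> = \<lambda>_2(G) and x = v - vbar; x stays orthogonal to the all-ones
  vector 1 along every trajectory. Averaging over the edge {a, b} lowers |x|^2 by (x_a - x_b)^2 / 2,
  so given x(t) the expected value of |x(t+1)|^2 is |x(t)|^2 - x^T L x / (2 |E|). Since
  x^T L x \<ge> \<lambda> |x|^2 on the orthogonal complement of 1, this gives
  E |x(t)|^2 \<le> (1 - \<lambda> / (2 |E|))^t |x(0)|^2, and the upper bound follows from
  |y|_1 \<le> sqrt n |y|_2 and (E Y)^2 \<le> E Y^2. For the lower bound, the mean state obeys
  E v(t+1) = (I - L / (2 |E|)) E v(t); started at a unit eigenvector u of \<lambda> orthogonal to 1 it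
  equals (1 - \<lambda> / (2 |E|))^t u, and E |v(t)|_1 \<ge> |E v(t)|_1 \<ge> (1 - \<lambda> / (2 |E|))^t |u|_2.

  Here \<lambda>_2 is the second entry of the sorted multiset of roots of the characteristic polynomial,
  so the main work is to identify it with the minimum of the Rayleigh quotient on the complement
  of 1. Connectivity is used twice: only the constants satisfy L x = 0, and 0 is a simple root,
  which follows by conjugating L into a matrix with zero first column.
*)

section \<open>A simple zero of the characteristic polynomial\<close>

text \<open>Conjugating a matrix with
  zero row sums by it produces a zero first column, which splits off the root 0 of the
  characteristic polynomial.\<close>
definition ones_involution :: "nat \<Rightarrow> 'a::ring_1 mat" where
  "ones_involution n = mat n n (\<lambda>(i, j). if j = 0 then 1 else if i = j then -1 else 0)"

lemma ones_involution_carrier [simp]: "ones_involution n \<in> carrier_mat n n"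
  by (simp add: ones_involution_def)

lemma ones_involution_square: "ones_involution n * ones_involution n = (1\<^sub>m n :: 'a::ring_1 mat)"
proof (rule eq_matI)
  fix i j assume "i < dim_row (1\<^sub>m n :: 'a mat)" "j < dim_col (1\<^sub>m n :: 'a mat)"
  then have i: "i < n" and j: "j < n" by auto
  let ?P = "ones_involution n :: 'a mat"
  have "(?P * ?P) $$ (i, j) = (\<Sum>k = 0..<n. ?P $$ (i, k) * ?P $$ (k, j))"
    using i j by (simp add: scalar_prod_def ones_involution_def)
  also have "\<dots> = (\<Sum>k = 0..<n. (if k = 0 then ?P $$ (0, j) else 0)
                     - (if k = i then (if i = 0 then 0 else ?P $$ (i, j)) else 0))"
    using i by (intro sum.cong) (auto simp: ones_involution_def)
  also have "\<dots> = 1\<^sub>m n $$ (i, j)"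
    using i j by (simp add: sum_subtractf ones_involution_def)
  finally show "(?P * ?P) $$ (i, j) = 1\<^sub>m n $$ (i, j)" .
qed (auto simp: ones_involution_def)

lemma ones_involution_mult_unit_vec_0:
  assumes "0 < n"
  shows "ones_involution n *\<^sub>v unit_vec n 0 = (vec n (\<lambda>_. 1) :: 'a::ring_1 vec)"
  using assms by (intro eq_vecI) (auto simp: ones_involution_def)

lemma ones_involution_mult_vec_nth_0:
  fixes w :: "'a::ring_1 vec"
  assumes "w \<in> carrier_vec n" "0 < n"
  shows "(ones_involution n *\<^sub>v w) $ 0 = w $ 0"
proof -
  have "(ones_involution n *\<^sub>v w) $ 0 = (\<Sum>k = 0..<n. ones_involution n $$ (0, k) * w $ k)"
    using assms by (simp add: ones_involution_def scalar_prod_def)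
  also have "\<dots> = (\<Sum>k = 0..<n. if k = 0 then w $ 0 else 0)"
    using assms by (intro sum.cong) (auto simp: ones_involution_def)
  finally show ?thesis using assms by simp
qed

lemma ones_involution_conj:
  fixes A :: "'a::ring_1 mat"
  assumes A: "A \<in> carrier_mat n n"
  shows "ones_involution n * (ones_involution n * A * ones_involution n) = A * ones_involution n"
proof -
  let ?P = "ones_involution n :: 'a mat"
  have "?P * (?P * A * ?P) = ?P * (?P * (A * ?P))"
    using A by (simp add: assoc_mult_mat[of ?P n n A n ?P n])
  also have "\<dots> = (?P * ?P) * (A * ?P)"
    using A by (simp add: assoc_mult_mat[of ?P n n ?P n "A * ?P" n])
  also have "\<dots> = A * ?P"
    using A by (simp add: ones_involution_square)
  finally show ?thesis .
qed

lemma mult_mat_vec_zero: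
  "A \<in> carrier_mat nr nc \<Longrightarrow> A *\<^sub>v 0\<^sub>v nc = (0\<^sub>v nr :: 'a::semiring_0 vec)"
  by (intro eq_vecI) auto

lemma mult_mat_vec_vCons_0_nth_Suc:
  fixes B :: "'a::comm_ring_1 mat" and y :: "'a vec"
  assumes B: "B \<in> carrier_mat (Suc m) (Suc m)" and y: "y \<in> carrier_vec m" and i: "i < m"
  shows "(B *\<^sub>v vCons 0 y) $ Suc i = (mat_delete B 0 0 *\<^sub>v y) $ i"
proof -
  have "(B *\<^sub>v vCons 0 y) $ Suc i = (\<Sum>k<Suc m. B $$ (Suc i, k) * vCons 0 y $ k)"
    using B y i by (simp add: scalar_prod_def atLeast0LessThan)
  also have "\<dots> = (\<Sum>k<m. B $$ (Suc i, Suc k) * y $ k)"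
    using y by (subst sum.lessThan_Suc_shift) simp
  also have "\<dots> = (mat_delete B 0 0 *\<^sub>v y) $ i"
    using B y i by (simp add: scalar_prod_def atLeast0LessThan mat_delete_def)
  finally show ?thesis .
qed

lemma mult_mat_vec_vCons_0:
  fixes B :: "'a::comm_ring_1 mat" and y :: "'a vec"
  assumes B: "B \<in> carrier_mat (Suc m) (Suc m)" and y: "y \<in> carrier_vec m"
    and kernel: "mat_delete B 0 0 *\<^sub>v y = 0\<^sub>v m"
  shows "B *\<^sub>v vCons 0 y = (B *\<^sub>v vCons 0 y) $ 0 \<cdot>\<^sub>v unit_vec (Suc m) 0"
proof (rule eq_vecI)
  fix i assume "i < dim_vec ((B *\<^sub>v vCons 0 y) $ 0 \<cdot>\<^sub>v unit_vec (Suc m) 0)"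
  then have i: "i < Suc m" by simp
  show "(B *\<^sub>v vCons 0 y) $ i = ((B *\<^sub>v vCons 0 y) $ 0 \<cdot>\<^sub>v unit_vec (Suc m) 0) $ i"
  proof (cases i)
    case (Suc i')
    then show ?thesis
      using mult_mat_vec_vCons_0_nth_Suc[OF B y, of i'] kernel i by simp
  qed (use i in simp)
qed (use B in simp)

lemma ones_involution_conj_mult_vCons_0:
  fixes A :: "'a::field mat" and m :: nat
  defines "P \<equiv> ones_involution (Suc m) :: 'a mat"
  assumes A: "A \<in> carrier_mat (Suc m) (Suc m)" and y: "y \<in> carrier_vec m"
    and kernel: "mat_delete (P * A * P) 0 0 *\<^sub>v y = 0\<^sub>v m"
  shows "A *\<^sub>v (P *\<^sub>v vCons 0 y) = ((P * A * P) *\<^sub>v vCons 0 y) $ 0 \<cdot>\<^sub>v vec (Suc m) (\<lambda>_. 1)"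
proof -
  define B where "B = P * A * P"
  define w where "w = vCons 0 y"
  have P: "P \<in> carrier_mat (Suc m) (Suc m)" and B: "B \<in> carrier_mat (Suc m) (Suc m)"
    and w: "w \<in> carrier_vec (Suc m)"
    using A y by (auto simp: P_def B_def w_def intro!: mult_carrier_mat)
  have "A *\<^sub>v (P *\<^sub>v w) = (A * P) *\<^sub>v w"
    using A P w by (simp add: assoc_mult_mat_vec)
  also have "\<dots> = P *\<^sub>v (B *\<^sub>v w)"
    using ones_involution_conj[OF A] assoc_mult_mat_vec[OF P B w] by (simp add: B_def P_def)
  also have "\<dots> = P *\<^sub>v ((B *\<^sub>v w) $ 0 \<cdot>\<^sub>v unit_vec (Suc m) 0)"
    unfolding w_def using B y kernel by (subst mult_mat_vec_vCons_0) (simp_all add: B_def)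
  also have "\<dots> = (B *\<^sub>v w) $ 0 \<cdot>\<^sub>v (P *\<^sub>v unit_vec (Suc m) 0)"
    by (rule mult_mat_vec[OF P]) simp
  also have "\<dots> = (B *\<^sub>v w) $ 0 \<cdot>\<^sub>v vec (Suc m) (\<lambda>_. 1)"
    by (simp add: P_def ones_involution_mult_unit_vec_0)
  finally show ?thesis by (simp add: B_def w_def)
qed

lemma mat_delete_ones_involution_conj_kernel:
  fixes A :: "'a::field mat" and m :: nat
  defines "P \<equiv> ones_involution (Suc m) :: 'a mat"
  assumes A: "A \<in> carrier_mat (Suc m) (Suc m)"
    and preimage_ones: "\<And>z c. z \<in> carrier_vec (Suc m)
      \<Longrightarrow> A *\<^sub>v z = c \<cdot>\<^sub>v vec (Suc m) (\<lambda>_. 1) \<Longrightarrow> z = z $ 0 \<cdot>\<^sub>v vec (Suc m) (\<lambda>_. 1)"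
    and y: "y \<in> carrier_vec m" and kernel: "mat_delete (P * A * P) 0 0 *\<^sub>v y = 0\<^sub>v m"
  shows "y = 0\<^sub>v m"
proof -
  define z where "z = P *\<^sub>v vCons 0 y"
  have P: "P \<in> carrier_mat (Suc m) (Suc m)" by (simp add: P_def)
  have z: "z \<in> carrier_vec (Suc m)" "z $ 0 = 0"
    using P y by (simp add: z_def) (simp add: z_def P_def ones_involution_mult_vec_nth_0 y)
  have "z = 0\<^sub>v (Suc m)"
    using preimage_ones[OF z(1)] ones_involution_conj_mult_vCons_0[OF A y] kernel z
    by (auto simp: z_def P_def intro!: eq_vecI)
  then have "vCons 0 y = (P * P) *\<^sub>v vCons 0 y"
    using y by (simp add: P_def ones_involution_square)
  also have "\<dots> = 0\<^sub>v (Suc m)"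
    using P y \<open>z = 0\<^sub>v (Suc m)\<close> by (simp add: z_def assoc_mult_mat_vec mult_mat_vec_zero)
  finally have cons: "vCons 0 y = 0\<^sub>v (Suc m)" .
  show "y = 0\<^sub>v m"
  proof (rule eq_vecI)
    fix j assume "j < dim_vec (0\<^sub>v m :: 'a vec)"
    then show "y $ j = 0\<^sub>v m $ j"
      using arg_cong[OF cons, of "\<lambda>v. v $ Suc j"] by simp
  qed (use y in simp)
qed

lemma char_poly_ones_involution_conj:
  fixes A :: "'a::field mat" and n :: nat
  defines "P \<equiv> ones_involution n :: 'a mat"
  assumes A: "A \<in> carrier_mat n n" and n: "0 < n" and ones: "A *\<^sub>v vec n (\<lambda>_. 1) = 0\<^sub>v n"
  shows "char_poly A = monom 1 1 * char_poly (mat_delete (P * A * P) 0 0)"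
proof -
  define B where "B = P * A * P"
  have P: "P \<in> carrier_mat n n" and B: "B \<in> carrier_mat n n" and PP: "P * P = 1\<^sub>m n"
    using A by (auto simp: P_def B_def ones_involution_square intro!: mult_carrier_mat)
  have "P * B = A * P"
    using A by (simp add: B_def P_def ones_involution_conj)
  then have "similar_mat_wit A B P P"
    using A P B PP unfolding similar_mat_wit_def by (simp add: Let_def assoc_mult_mat[of A n n P n P n])
  then have "char_poly A = char_poly B"
    by (intro char_poly_similar) (auto simp: similar_mat_def)
  also have "char_poly B = monom 1 1 * char_poly (mat_delete B 0 0)"
  proof (rule char_poly_0_column[OF _ B n])
    have "col B 0 = (P * A) *\<^sub>v col P 0"
      unfolding B_def using A P n by (intro col_mult2) auto
    also have "\<dots> = P *\<^sub>v (A *\<^sub>v col P 0)"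
      using A P by (intro assoc_mult_mat_vec) auto
    also have "\<dots> = 0\<^sub>v n"
      using P n ones by (simp add: P_def ones_involution_def mult_mat_vec_zero)
    finally show "B $$ (j, 0) = 0" if "j < n" for j
      using that B n by (metis col_def index_vec index_zero_vec(1) carrier_matD(1))
  qed
  finally show ?thesis by (simp add: B_def)
qed

lemma order_0_char_poly_eq_1:
  fixes A :: "'a::field mat"
  assumes A: "A \<in> carrier_mat n n" and n: "0 < n"
    and ones: "A *\<^sub>v vec n (\<lambda>_. 1) = 0\<^sub>v n"
    and preimage_ones: "\<And>z c. z \<in> carrier_vec n
      \<Longrightarrow> A *\<^sub>v z = c \<cdot>\<^sub>v vec n (\<lambda>_. 1) \<Longrightarrow> z = z $ 0 \<cdot>\<^sub>v vec n (\<lambda>_. 1)"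
  shows "order 0 (char_poly A) = 1"
proof -
  obtain m where m: "n = Suc m" using n by (cases n) auto
  define D where "D = mat_delete (ones_involution n * A * ones_involution n) 0 0"
  have "ones_involution n * A * ones_involution n \<in> carrier_mat n n"
    using A by (intro mult_carrier_mat) auto
  from mat_delete_carrier[OF this, of 0 0] have D: "D \<in> carrier_mat m m"
    by (simp add: D_def m)
  have "\<not> eigenvalue D 0"
  proof
    assume "eigenvalue D 0"
    then obtain y where "eigenvector D y 0"
      unfolding eigenvalue_def ..
    then have "y \<in> carrier_vec m" "y \<noteq> 0\<^sub>v m" "D *\<^sub>v y = 0\<^sub>v m"
      using D by (auto simp: eigenvector_def intro!: eq_vecI)
    with mat_delete_ones_involution_conj_kernel[of A m y] A preimage_ones show False
      by (simp add: m D_def)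
  qed
  then have "poly (char_poly D) 0 \<noteq> 0"
    by (simp add: eigenvalue_root_char_poly[OF D])
  then show ?thesis
    unfolding char_poly_ones_involution_conj[OF A n ones] D_def[symmetric]
    by (subst order_mult) (auto simp: order_root)
qed

section \<open>The Laplacian quadratic form\<close>

text \<open>In matrix notation, \<open>laplacian_form E x y\<close> is \<open>x\<^sup>T L y\<close> and
  \<open>laplacian_apply E x i\<close> is \<open>(L x)\<^sub>i\<close>. For an edge \<open>e = {a, b}\<close> the summand of the
  form is \<open>(x a - x b) * (y a - y b)\<close> (lemma \<open>laplacian_form_edge\<close>); the symmetric
  expression avoids choosing an orientation of the edge.\<close>
definition laplacian_form ::
  "nat set set \<Rightarrow> (nat \<Rightarrow> real) \<Rightarrow> (nat \<Rightarrow> real) \<Rightarrow> real" where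
  "laplacian_form E x y = (\<Sum>e\<in>E. 2 * (\<Sum>k\<in>e. x k * y k) - sum x e * sum y e)"

definition laplacian_apply :: "nat set set \<Rightarrow> (nat \<Rightarrow> real) \<Rightarrow> nat \<Rightarrow> real" where
  "laplacian_apply E x i = (\<Sum>e\<in>{e\<in>E. i \<in> e}. 2 * x i - sum x e)"

definition dotp :: "nat \<Rightarrow> (nat \<Rightarrow> real) \<Rightarrow> (nat \<Rightarrow> real) \<Rightarrow> real" where
  "dotp n x y = (\<Sum>i<n. x i * y i)"

lemma laplacian_form_edge:
  fixes x y :: "nat \<Rightarrow> real"
  assumes "a \<noteq> b"
  shows "2 * (\<Sum>k\<in>{a, b}. x k * y k) - sum x {a, b} * sum y {a, b} = (x a - x b) * (y a - y b)"
  using assms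
  by (simp add: algebra_simps)

lemma laplacian_form_commute: "laplacian_form E x y = laplacian_form E y x"
  unfolding laplacian_form_def by (simp add: mult.commute)

lemma laplacian_form_add_left:
  "laplacian_form E (\<lambda>i. x i + s * y i) z = laplacian_form E x z + s * laplacian_form E y z"
proof -
  have "sum (\<lambda>i. x i + s * y i) e = sum x e + s * sum y e"
    and "(\<Sum>k\<in>e. (x k + s * y k) * z k) = (\<Sum>k\<in>e. x k * z k) + s * (\<Sum>k\<in>e. y k * z k)" for e
    by (simp_all add: sum.distrib sum_distrib_left algebra_simps)
  then have "2 * (\<Sum>k\<in>e. (x k + s * y k) * z k) - sum (\<lambda>i. x i + s * y i) e * sum z e
      = (2 * (\<Sum>k\<in>e. x k * z k) - sum x e * sum z e) + s * (2 * (\<Sum>k\<in>e. y k * z k) - sum y e * sum z e)"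
    for e by (simp add: algebra_simps)
  then show ?thesis
    unfolding laplacian_form_def by (simp only: sum.distrib sum_distrib_left)
qed

lemma laplacian_form_add_right:
  "laplacian_form E z (\<lambda>i. x i + s * y i) = laplacian_form E z x + s * laplacian_form E z y"
  by (simp add: laplacian_form_commute[of E z] laplacian_form_add_left)

lemma laplacian_form_scale_left: "laplacian_form E (\<lambda>i. c * x i) z = c * laplacian_form E x z"
  using laplacian_form_add_left[of E "\<lambda>_. 0" c x z] by (simp add: laplacian_form_def)

lemma laplacian_form_scale:
  "laplacian_form E (\<lambda>i. c * x i) (\<lambda>i. c * x i) = c\<^sup>2 * laplacian_form E x x"
  by (simp add: laplacian_form_scale_left laplacian_form_commute[of E x "\<lambda>i. c * x i"] power2_eq_square)

lemma laplacian_form_add_scaled: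
  "laplacian_form E (\<lambda>i. x i + s * y i) (\<lambda>i. x i + s * y i)
     = laplacian_form E x x + 2 * s * laplacian_form E x y + s\<^sup>2 * laplacian_form E y y"
  by (simp add: laplacian_form_add_left laplacian_form_add_right laplacian_form_commute[of E y x]
      power2_eq_square algebra_simps)

lemma laplacian_apply_scale: "laplacian_apply E (\<lambda>k. c * x k) i = c * laplacian_apply E x i"
  unfolding laplacian_apply_def by (simp add: sum_distrib_left algebra_simps)

lemma dotp_add_scaled:
  "dotp n (\<lambda>i. x i + s * y i) (\<lambda>i. x i + s * y i) = dotp n x x + 2 * s * dotp n x y + s\<^sup>2 * dotp n y y"
  unfolding dotp_def by (simp add: sum.distrib sum_distrib_left algebra_simps power2_eq_square)

lemma dotp_self_nonneg: "0 \<le> dotp n x x"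
  unfolding dotp_def by (simp add: sum_nonneg)

lemma dotp_self_eq_0_iff: "dotp n x x = 0 \<longleftrightarrow> (\<forall>i<n. x i = 0)"
  unfolding dotp_def by (auto simp: sum_nonneg_eq_0_iff)

lemma norm2_eq_sqrt_dotp: "norm2 n x = sqrt (dotp n x x)"
  by (simp add: norm2_def dotp_def power2_eq_square)

locale finite_simple_graph =
  fixes n :: nat and E :: "nat set set"
  assumes simple: "simple_graph n E"
begin

lemma edgeE:
  assumes "e \<in> E"
  obtains a b where "e = {a, b}" "a \<noteq> b" "a < n" "b < n"
proof -
  from assms simple obtain a b where "e = {a, b}" "a \<noteq> b"
    unfolding simple_graph_def by (meson card_2_iff)
  with assms simple that show ?thesis unfolding simple_graph_def by auto
qed

lemma edge_subset: "e \<in> E \<Longrightarrow> e \<subseteq> {..<n}"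
  by (auto elim: edgeE)

lemma finite_edges: "finite E"
  by (rule finite_subset[of _ "Pow {..<n}"]) (auto dest: edge_subset)

lemma laplacian_form_term_nonneg:
  fixes x :: "nat \<Rightarrow> real"
  shows "e \<in> E \<Longrightarrow> 0 \<le> 2 * (\<Sum>k\<in>e. x k * x k) - sum x e * sum x e"
  by (elim edgeE) (use laplacian_form_edge in simp)

lemma laplacian_form_nonneg: "0 \<le> laplacian_form E x x"
  unfolding laplacian_form_def by (intro sum_nonneg laplacian_form_term_nonneg)

lemma laplacian_form_le: "laplacian_form E x x \<le> 2 * card E * dotp n x x"
proof -
  have "laplacian_form E x x \<le> (\<Sum>e\<in>E. 2 * dotp n x x)"
    unfolding laplacian_form_def
  proof (rule sum_mono)
    fix e assume "e \<in> E"
    then have "(\<Sum>k\<in>e. x k * x k) \<le> dotp n x x"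
      unfolding dotp_def by (intro sum_mono2) (auto dest: edge_subset)
    then show "2 * (\<Sum>k\<in>e. x k * x k) - sum x e * sum x e \<le> 2 * dotp n x x"
      using zero_le_square[of "sum x e"] by linarith
  qed
  then show ?thesis by simp
qed

lemma laplacian_form_cong:
  assumes "\<And>i. i < n \<Longrightarrow> x i = x' i" "\<And>i. i < n \<Longrightarrow> y i = y' i"
  shows "laplacian_form E x y = laplacian_form E x' y'"
  unfolding laplacian_form_def
  by (intro sum.cong refl arg_cong2[where f = "\<lambda>a b. 2 * a - b"] arg_cong2[where f = "(*)"])
     (use assms in \<open>auto dest!: edge_subset intro!: sum.cong\<close>)

lemma laplacian_apply_cong:
  assumes "\<And>k. k < n \<Longrightarrow> x k = x' k"
  shows "laplacian_apply E x i = laplacian_apply E x' i"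
  unfolding laplacian_apply_def
proof (intro sum.cong refl)
  fix e assume "e \<in> {e\<in>E. i \<in> e}"
  then have "e \<subseteq> {..<n}" "i \<in> e" by (auto dest: edge_subset)
  then have "x i = x' i" "sum x e = sum x' e"
    using assms by (auto intro!: sum.cong)
  then show "2 * x i - sum x e = 2 * x' i - sum x' e" by simp
qed

lemma laplacian_apply_const: "laplacian_apply E (\<lambda>_. c) i = 0"
  unfolding laplacian_apply_def by (rule sum.neutral) (auto elim!: edgeE)

lemma dotp_laplacian_apply: "dotp n y (laplacian_apply E x) = laplacian_form E y x"
proof -
  have "dotp n y (laplacian_apply E x) = (\<Sum>i<n. \<Sum>e\<in>{e. e \<in> E \<and> i \<in> e}. y i * (2 * x i - sum x e))"
    unfolding dotp_def laplacian_apply_def by (simp add: sum_distrib_left)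
  also have "\<dots> = (\<Sum>e\<in>E. \<Sum>i\<in>{i. i \<in> {..<n} \<and> i \<in> e}. y i * (2 * x i - sum x e))"
    using finite_edges by (rule sum.swap_restrict[OF finite_lessThan])
  also have "\<dots> = (\<Sum>e\<in>E. \<Sum>i\<in>e. y i * (2 * x i - sum x e))"
    by (intro sum.cong refl) (auto dest!: edge_subset)
  also have "\<dots> = laplacian_form E y x"
    unfolding laplacian_form_def
    by (intro sum.cong refl) (simp add: sum_subtractf sum_distrib_left sum_distrib_right algebra_simps)
  finally show ?thesis .
qed

lemma sum_laplacian_apply: "(\<Sum>i<n. laplacian_apply E x i) = 0"
  using dotp_laplacian_apply[of "\<lambda>_. 1" x] dotp_laplacian_apply[of x "\<lambda>_. 1"]
  by (simp add: dotp_def laplacian_form_commute laplacian_apply_const)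

lemma sum_edges_at:
  "(\<Sum>e\<in>{e\<in>E. i \<in> e}. h e) = (\<Sum>j\<in>{j. {i, j} \<in> E}. h {i, j})"
proof -
  have "{e\<in>E. i \<in> e} = (\<lambda>j. {i, j}) ` {j. {i, j} \<in> E}"
  proof (intro equalityI subsetI)
    fix e assume e: "e \<in> {e\<in>E. i \<in> e}"
    then obtain a b where ab: "e = {a, b}" by (auto elim: edgeE)
    obtain j where "e = {i, j}"
      using e unfolding ab by (cases "i = a") (auto simp: insert_commute)
    with e show "e \<in> (\<lambda>j. {i, j}) ` {j. {i, j} \<in> E}"
      by (intro image_eqI[of e _ j]) auto
  qed auto
  moreover have "inj_on (\<lambda>j. {i, j}) {j. {i, j} \<in> E}"
    by (auto simp: inj_on_def doubleton_eq_iff)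
  ultimately show ?thesis by (simp add: sum.reindex)
qed

lemma laplacian_apply_neighbours: "laplacian_apply E x i = (\<Sum>j\<in>{j. {i, j} \<in> E}. x i - x j)"
  unfolding laplacian_apply_def sum_edges_at
proof (intro sum.cong refl)
  fix j assume "j \<in> {j. {i, j} \<in> E}"
  then have "i \<noteq> j" using simple unfolding simple_graph_def by fastforce
  then show "2 * x i - sum x {i, j} = x i - x j" by simp
qed

lemma laplacian_carrier: "laplacian n E \<in> carrier_mat n n"
  by (simp add: laplacian_def)

lemma laplacian_row:
  assumes i: "i < n"
  shows "(\<Sum>j<n. laplacian n E $$ (i, j) * x j) = laplacian_apply E x i"
proof -
  let ?N = "{j. {i, j} \<in> E}"
  have N: "?N \<subseteq> {..<n} - {i}"
    using simple unfolding simple_graph_def by (fastforce dest: edge_subset)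
  have "{i} \<notin> E"
    using simple unfolding simple_graph_def by fastforce
  have "(\<Sum>j<n. laplacian n E $$ (i, j) * x j)
      = (\<Sum>j<n. (if j = i then real (degree E i) * x i else 0) - (if j \<in> ?N then x j else 0))"
    using i N \<open>{i} \<notin> E\<close> by (intro sum.cong) (auto simp: laplacian_def)
  also have "\<dots> = real (card ?N) * x i - (\<Sum>j\<in>?N. x j)"
  proof -
    have "{..<n} \<inter> ?N = ?N" using N by blast
    then show ?thesis
      using i N sum.inter_restrict[of "{..<n}" x ?N, symmetric] by (simp add: sum_subtractf degree_def)
  qed
  also have "\<dots> = laplacian_apply E x i"
    by (simp add: laplacian_apply_neighbours sum_subtractf)
  finally show ?thesis .
qed

lemma laplacian_mult_vec:
  assumes "v \<in> carrier_vec n"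
  shows "laplacian n E *\<^sub>v v = vec n (laplacian_apply E (($) v))"
proof (rule eq_vecI)
  fix i assume "i < dim_vec (vec n (laplacian_apply E (($) v)))"
  then have i: "i < n" by simp
  have "(laplacian n E *\<^sub>v v) $ i = (\<Sum>j<n. laplacian n E $$ (i, j) * v $ j)"
    using i assms laplacian_carrier by (simp add: scalar_prod_def atLeast0LessThan)
  then show "(laplacian n E *\<^sub>v v) $ i = vec n (laplacian_apply E (($) v)) $ i"
    using i by (simp add: laplacian_row)
qed (use laplacian_carrier in simp)

lemma poly_char_poly_laplacian_eq_0_iff:
  "poly (char_poly (laplacian n E)) r = 0
     \<longleftrightarrow> (\<exists>x. (\<exists>i<n. x i \<noteq> 0) \<and> (\<forall>i<n. laplacian_apply E x i = r * x i))"
  (is "_ \<longleftrightarrow> (\<exists>x. ?eigen x)")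
proof
  assume "poly (char_poly (laplacian n E)) r = 0"
  then have "eigenvalue (laplacian n E) r"
    by (simp add: eigenvalue_root_char_poly[OF laplacian_carrier])
  then obtain v where v: "v \<in> carrier_vec n" "v \<noteq> 0\<^sub>v n" "laplacian n E *\<^sub>v v = r \<cdot>\<^sub>v v"
    using laplacian_carrier by (auto simp: eigenvalue_def eigenvector_def)
  have "\<exists>i<n. v $ i \<noteq> 0"
  proof (rule ccontr)
    assume "\<not> (\<exists>i<n. v $ i \<noteq> 0)"
    then have "v = 0\<^sub>v n" using v(1) by (intro eq_vecI) auto
    with v(2) show False ..
  qed
  moreover have "laplacian_apply E (($) v) i = r * v $ i" if "i < n" for i
    using arg_cong[OF v(3), of "\<lambda>w. w $ i"] that v(1) by (simp add: laplacian_mult_vec)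
  ultimately show "\<exists>x. ?eigen x" by blast
next
  assume "\<exists>x. ?eigen x"
  then obtain x i0 where x: "i0 < n" "x i0 \<noteq> 0" "\<And>i. i < n \<Longrightarrow> laplacian_apply E x i = r * x i"
    by blast
  have "laplacian_apply E (($) (vec n x)) i = laplacian_apply E x i" for i
    by (rule laplacian_apply_cong) simp
  then have "laplacian n E *\<^sub>v vec n x = r \<cdot>\<^sub>v vec n x"
    using x(3) by (intro eq_vecI) (simp_all add: laplacian_mult_vec)
  moreover have "vec n x \<noteq> 0\<^sub>v n"
    using x(1,2) by (metis index_vec index_zero_vec(1))
  ultimately have "eigenvalue (laplacian n E) r"
    using laplacian_carrier unfolding eigenvalue_def eigenvector_def by (intro exI[of _ "vec n x"]) simp
  then show "poly (char_poly (laplacian n E)) r = 0"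
    by (simp add: eigenvalue_root_char_poly[OF laplacian_carrier])
qed

lemma laplacian_root_eq_0_or_ge:
  assumes lower: "\<And>x. (\<Sum>i<n. x i) = 0 \<Longrightarrow> \<mu> * dotp n x x \<le> laplacian_form E x x"
    and root: "poly (char_poly (laplacian n E)) r = 0"
  shows "r = 0 \<or> \<mu> \<le> r"
proof (cases "r = 0")
  case False
  obtain x where x: "\<exists>i<n. x i \<noteq> 0" and eigen: "\<forall>i<n. laplacian_apply E x i = r * x i"
    using root unfolding poly_char_poly_laplacian_eq_0_iff by blast
  have "r * (\<Sum>i<n. x i) = 0"
    using sum_laplacian_apply[of x] eigen by (simp add: sum_distrib_left)
  then have "\<mu> * dotp n x x \<le> laplacian_form E x x"
    using False by (intro lower) simp
  also have "laplacian_form E x x = dotp n x (laplacian_apply E x)"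
    by (simp add: dotp_laplacian_apply)
  also have "\<dots> = r * dotp n x x"
    unfolding dotp_def sum_distrib_left by (intro sum.cong) (auto simp: eigen)
  finally have "\<mu> * dotp n x x \<le> r * dotp n x x" .
  moreover have "dotp n x x \<noteq> 0"
    using x dotp_self_eq_0_iff[of n x] by blast
  then have "0 < dotp n x x"
    using dotp_self_nonneg[of n x] by linarith
  ultimately show ?thesis by simp
qed simp

end

locale connected_simple_graph = finite_simple_graph +
  assumes two_le_n: "2 \<le> n" and connected: "connected_graph n E"
begin

lemma edges_nonempty: "E \<noteq> {}"
proof -
  have "(\<lambda>x y. {x, y} \<in> E)\<^sup>*\<^sup>* 0 1"
    using connected two_le_n unfolding connected_graph_def by auto
  then show ?thesis by (cases rule: converse_rtranclpE) auto
qed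

lemma card_edges_pos: "0 < card E"
  using finite_edges edges_nonempty by (simp add: card_gt_0_iff)

lemma const_if_laplacian_form_eq_0:
  assumes "laplacian_form E x x = 0" "i < n"
  shows "x i = x 0"
proof -
  have "\<forall>e\<in>E. 2 * (\<Sum>k\<in>e. x k * x k) - sum x e * sum x e = 0"
    using assms(1) laplacian_form_term_nonneg[of _ x]
    by (simp add: laplacian_form_def sum_nonneg_eq_0_iff[OF finite_edges])
  have edge: "x a = x b" if ab: "{a, b} \<in> E" for a b
  proof -
    have "a \<noteq> b" using ab by (auto elim!: edgeE simp: doubleton_eq_iff)
    moreover have "2 * (\<Sum>k\<in>{a, b}. x k * x k) - sum x {a, b} * sum x {a, b} = 0"
      using ab \<open>\<forall>e\<in>E. _\<close> by blast
    ultimately have "(x a - x b) * (x a - x b) = 0"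
      using laplacian_form_edge[of a b x x] by simp
    then show ?thesis by simp
  qed
  have "(\<lambda>x y. {x, y} \<in> E)\<^sup>*\<^sup>* 0 i"
    using connected two_le_n assms(2) unfolding connected_graph_def by auto
  then show ?thesis
    by (induction rule: rtranclp_induct) (auto dest: edge)
qed

lemma laplacian_form_pos:
  assumes "(\<Sum>i<n. u i) = 0" "\<exists>i<n. u i \<noteq> 0"
  shows "0 < laplacian_form E u u"
proof -
  have "laplacian_form E u u \<noteq> 0"
  proof
    assume "laplacian_form E u u = 0"
    then have const: "u i = u 0" if "i < n" for i using that by (rule const_if_laplacian_form_eq_0)
    have "(\<Sum>i<n. u i) = (\<Sum>i<n. u 0)"
      by (intro sum.cong) (auto intro: const)
    then have "u 0 = 0" using assms(1) two_le_n by simp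
    obtain i where "i < n" "u i \<noteq> 0" using assms(2) by blast
    then show False using const[OF \<open>i < n\<close>] \<open>u 0 = 0\<close> by simp
  qed
  then show ?thesis using laplacian_form_nonneg[of u] by simp
qed

lemma order_0_char_poly_laplacian: "order 0 (char_poly (laplacian n E)) = 1"
proof (rule order_0_char_poly_eq_1[OF laplacian_carrier])
  show "0 < n" using two_le_n by simp
  have "laplacian_apply E (($) (vec n (\<lambda>_. 1))) i = laplacian_apply E (\<lambda>_. 1) i" for i
    by (rule laplacian_apply_cong) simp
  then show "laplacian n E *\<^sub>v vec n (\<lambda>_. 1) = 0\<^sub>v n"
    by (simp add: laplacian_mult_vec laplacian_apply_const vec_eq_iff)
next
  fix z c assume z: "z \<in> carrier_vec n" and Lzc: "laplacian n E *\<^sub>v z = c \<cdot>\<^sub>v vec n (\<lambda>_. 1)"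
  have Lz: "laplacian_apply E (($) z) i = c" if "i < n" for i
  proof -
    have "laplacian_apply E (($) z) i = (laplacian n E *\<^sub>v z) $ i"
      using z that by (simp add: laplacian_mult_vec)
    then show ?thesis using Lzc that by simp
  qed
  have "real n * c = 0"
    using sum_laplacian_apply[of "($) z"] Lz by simp
  then have "laplacian_form E (($) z) (($) z) = 0"
    using two_le_n Lz by (simp add: dotp_laplacian_apply[symmetric] dotp_def)
  then have const: "z $ i = z $ 0" if "i < n" for i
    using that by (rule const_if_laplacian_form_eq_0)
  show "z = z $ 0 \<cdot>\<^sub>v vec n (\<lambda>_. 1)"
  proof (rule eq_vecI)
    fix i assume "i < dim_vec (z $ 0 \<cdot>\<^sub>v vec n (\<lambda>_. 1))"
    then show "z $ i = (z $ 0 \<cdot>\<^sub>v vec n (\<lambda>_. 1)) $ i" using const[of i] by simp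
  qed (use z in simp)
qed

end

section \<open>The second eigenvalue as a Rayleigh minimum\<close>

lemma linear_coeff_eq_0_if_quadratic_nonneg:
  fixes a b :: real
  assumes nonneg: "\<And>s. 0 \<le> a * s + b * s\<^sup>2"
  shows "a = 0"
proof (rule ccontr)
  assume "a \<noteq> 0"
  define c where "c = \<bar>b\<bar> + 1"
  have c: "0 < c" "b - c < 0" by (auto simp: c_def)
  have "a * (- a / c) + b * (- a / c)\<^sup>2 = a\<^sup>2 * (b - c) / c\<^sup>2"
    using c by (simp add: field_simps power2_eq_square)
  also have "\<dots> < 0"
    using \<open>a \<noteq> 0\<close> c by (intro divide_neg_pos mult_pos_neg) auto
  finally show False using nonneg[of "- a / c"] by simp
qed

lemma sorted_nth_1_eq:
  fixes xs :: "'a::{linorder, zero} list"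
  assumes sorted: "sorted xs" and zero_once: "count (mset xs) 0 = 1"
    and \<mu>: "\<mu> \<in> set xs" "0 < \<mu>" and others: "\<forall>r\<in>set xs. r = 0 \<or> \<mu> \<le> r"
  shows "xs ! 1 = \<mu>"
proof -
  have "0 \<in> set xs" using zero_once by (metis count_mset_0_iff zero_neq_one)
  then obtain a ys where xs: "xs = a # ys" by (cases xs) auto
  have "a = 0"
    using sorted others \<mu>(2) \<open>0 \<in> set xs\<close> unfolding xs by (auto dest: order.strict_trans2)
  then have "0 \<notin> set ys" "\<mu> \<in> set ys"
    using zero_once \<mu> unfolding xs by (auto simp: count_mset_0_iff)
  then obtain b zs where ys: "ys = b # zs" by (cases ys) auto
  have "b \<le> \<mu>" "\<mu> \<le> b"
    using sorted others \<open>\<mu> \<in> set ys\<close> \<open>0 \<notin> set ys\<close> unfolding xs ys by auto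
  then show ?thesis by (simp add: xs ys)
qed

text \<open>The coordinates beyond \<open>n\<close> are pinned to \<open>0\<close> so that the set is compact in the product
  topology on \<^typ>\<open>nat \<Rightarrow> real\<close>.\<close>
definition sphere_sum_zero :: "nat \<Rightarrow> (nat \<Rightarrow> real) set" where
  "sphere_sum_zero n = {x. (\<forall>i\<ge>n. x i = 0) \<and> (\<Sum>i<n. (x i)\<^sup>2) = 1 \<and> (\<Sum>i<n. x i) = 0}"

lemma compact_sphere_sum_zero: "compact (sphere_sum_zero n)"
proof -
  let ?K = "sphere_sum_zero n"
  define box :: "(nat \<Rightarrow> real) set" where "box = Pi\<^sub>E UNIV (\<lambda>i. if i < n then {-1..1} else {0})"
  have "compactin (product_topology (\<lambda>i. euclidean) UNIV) box"
    unfolding box_def compactin_PiE by (auto simp: compactin_euclidean_iff)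
  then have "compact box" by (simp add: euclidean_product_topology compactin_euclidean_iff)
  have coord: "continuous_on UNIV (\<lambda>x::nat \<Rightarrow> real. x i)" for i
    by (rule continuous_on_product_coordinates)
  have "closed {x::nat \<Rightarrow> real. x i = 0}" for i
    by (rule closed_Collect_eq) (auto intro: coord)
  moreover have "closed {x::nat \<Rightarrow> real. (\<Sum>i<n. (x i)\<^sup>2) = 1}"
    and "closed {x::nat \<Rightarrow> real. (\<Sum>i<n. x i) = 0}"
    by (rule closed_Collect_eq; auto intro!: continuous_intros coord)+
  ultimately have "closed ((\<Inter>i\<in>{n..}. {x::nat \<Rightarrow> real. x i = 0})
                            \<inter> {x. (\<Sum>i<n. (x i)\<^sup>2) = 1} \<inter> {x. (\<Sum>i<n. x i) = 0})"
    by (intro closed_Int closed_INT) auto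
  moreover have "?K = (\<Inter>i\<in>{n..}. {x. x i = 0})
                        \<inter> {x. (\<Sum>i<n. (x i)\<^sup>2) = 1} \<inter> {x. (\<Sum>i<n. x i) = 0}"
    by (auto simp: sphere_sum_zero_def)
  ultimately have "closed ?K" by simp
  moreover have "?K \<subseteq> box"
  proof
    fix x assume x: "x \<in> ?K"
    have "\<bar>x i\<bar> \<le> 1" if "i < n" for i
    proof -
      have "(x i)\<^sup>2 \<le> (\<Sum>j<n. (x j)\<^sup>2)" by (rule member_le_sum) (use that in auto)
      then show ?thesis using x by (simp add: abs_square_le_1 sphere_sum_zero_def)
    qed
    then show "x \<in> box" using x by (auto simp: box_def abs_le_iff sphere_sum_zero_def)
  qed
  ultimately have "compact (box \<inter> ?K)"
    using compact_Int_closed[OF \<open>compact box\<close>] by blast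
  moreover have "box \<inter> ?K = ?K" using \<open>?K \<subseteq> box\<close> by blast
  ultimately show ?thesis by simp
qed

lemma sphere_sum_zero_nonempty:
  assumes "2 \<le> n"
  shows "sphere_sum_zero n \<noteq> {}"
proof -
  define w :: "nat \<Rightarrow> real" where "w = (\<lambda>i. if i = 0 then 1 / sqrt 2 else if i = 1 then - 1 / sqrt 2 else 0)"
  have "(\<Sum>i<n. (w i)\<^sup>2) = (\<Sum>i\<in>{0, 1}. (w i)\<^sup>2)" "(\<Sum>i<n. w i) = (\<Sum>i\<in>{0, 1}. w i)"
    using assms by (intro sum.mono_neutral_right; auto simp: w_def)+
  then have "w \<in> sphere_sum_zero n"
    using assms by (auto simp: sphere_sum_zero_def w_def power_divide)
  then show ?thesis by blast
qed

definition rayleigh_minimizer :: "nat \<Rightarrow> nat set set \<Rightarrow> (nat \<Rightarrow> real) \<Rightarrow> bool" where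
  "rayleigh_minimizer n E u \<longleftrightarrow> (\<Sum>i<n. u i) = 0 \<and> dotp n u u = 1 \<and>
     (\<forall>x. (\<Sum>i<n. x i) = 0 \<longrightarrow> laplacian_form E u u * dotp n x x \<le> laplacian_form E x x)"

text \<open>Minimality at \<open>u + s y\<close> makes a quadratic polynomial in \<open>s\<close> nonnegative, so its linear
  coefficient vanishes.\<close>
lemma laplacian_form_rayleigh_minimizer:
  assumes u: "rayleigh_minimizer n E u" and sum_y: "(\<Sum>i<n. y i) = 0"
  shows "laplacian_form E u y = laplacian_form E u u * dotp n u y"
proof -
  let ?\<mu> = "laplacian_form E u u"
  have "0 \<le> (2 * (laplacian_form E u y - ?\<mu> * dotp n u y)) * s
            + (laplacian_form E y y - ?\<mu> * dotp n y y) * s\<^sup>2" for s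
  proof -
    have "(\<Sum>i<n. u i + s * y i) = 0"
      using u sum_y by (simp add: rayleigh_minimizer_def sum.distrib sum_distrib_left[symmetric])
    then have "?\<mu> * dotp n (\<lambda>i. u i + s * y i) (\<lambda>i. u i + s * y i)
                 \<le> laplacian_form E (\<lambda>i. u i + s * y i) (\<lambda>i. u i + s * y i)"
      using u by (simp add: rayleigh_minimizer_def)
    then show ?thesis
      using u unfolding dotp_add_scaled laplacian_form_add_scaled
      by (simp add: rayleigh_minimizer_def algebra_simps)
  qed
  then have "2 * (laplacian_form E u y - ?\<mu> * dotp n u y) = 0"
    by (rule linear_coeff_eq_0_if_quadratic_nonneg)
  then show ?thesis by simp
qed

lemma (in finite_simple_graph) laplacian_apply_rayleigh_minimizer:
  assumes u: "rayleigh_minimizer n E u" and i: "i < n"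
  shows "laplacian_apply E u i = laplacian_form E u u * u i"
proof -
  let ?\<mu> = "laplacian_form E u u"
  define w where "w = (\<lambda>i. if i < n then laplacian_apply E u i - ?\<mu> * u i else 0)"
  have "(\<Sum>i<n. w i) = 0"
    using sum_laplacian_apply[of u] u
    by (simp add: rayleigh_minimizer_def w_def sum_subtractf sum_distrib_left[symmetric])
  then have Bw: "laplacian_form E u w = ?\<mu> * dotp n u w"
    by (rule laplacian_form_rayleigh_minimizer[OF u])
  have "dotp n w w = (\<Sum>i<n. w i * laplacian_apply E u i - ?\<mu> * (u i * w i))"
    unfolding dotp_def by (intro sum.cong) (auto simp: w_def algebra_simps)
  also have "\<dots> = dotp n w (laplacian_apply E u) - ?\<mu> * dotp n u w"
    by (simp add: dotp_def sum_subtractf sum_distrib_left)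
  also have "\<dots> = 0"
    using Bw by (simp add: dotp_laplacian_apply laplacian_form_commute)
  finally have "dotp n w w = 0" .
  then show ?thesis
    using i by (simp add: dotp_self_eq_0_iff w_def)
qed

context connected_simple_graph
begin

lemma exists_rayleigh_minimizer: "\<exists>u. rayleigh_minimizer n E u"
proof -
  have "continuous_on (sphere_sum_zero n) (\<lambda>x. laplacian_form E x x)"
    unfolding laplacian_form_def
    by (intro continuous_intros continuous_on_subset[OF continuous_on_product_coordinates]) auto
  then obtain u where u: "u \<in> sphere_sum_zero n"
    and min: "\<And>y. y \<in> sphere_sum_zero n \<Longrightarrow> laplacian_form E u u \<le> laplacian_form E y y"
    using continuous_attains_inf[OF compact_sphere_sum_zero sphere_sum_zero_nonempty[OF two_le_n]]
    by blast
  have "laplacian_form E u u * dotp n x x \<le> laplacian_form E x x" if x: "(\<Sum>i<n. x i) = 0" for x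
  proof (cases "dotp n x x = 0")
    case True
    then show ?thesis by (simp add: laplacian_form_nonneg)
  next
    case False
    then have N: "0 < dotp n x x" using dotp_self_nonneg[of n x] by linarith
    define c where "c = 1 / sqrt (dotp n x x)"
    define y where "y = (\<lambda>i. if i < n then c * x i else 0)"
    have "(\<Sum>i<n. (y i)\<^sup>2) = c\<^sup>2 * dotp n x x"
      by (simp add: y_def dotp_def sum_distrib_left power2_eq_square mult_ac)
    also have "\<dots> = 1"
      using N by (simp add: c_def power_divide)
    finally have "y \<in> sphere_sum_zero n"
      using x by (simp add: sphere_sum_zero_def y_def sum_distrib_left[symmetric])
    then have "laplacian_form E u u \<le> laplacian_form E y y"
      by (rule min)
    also have "\<dots> = c\<^sup>2 * laplacian_form E x x"
      by (simp add: y_def laplacian_form_cong[of _ "\<lambda>i. c * x i"] laplacian_form_scale)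
    also have "\<dots> = laplacian_form E x x / dotp n x x"
      using N by (simp add: c_def power_divide)
    finally show ?thesis using N by (simp add: pos_le_divide_eq)
  qed
  then have "rayleigh_minimizer n E u"
    using u by (simp add: rayleigh_minimizer_def sphere_sum_zero_def dotp_def power2_eq_square)
  then show ?thesis by blast
qed

text \<open>\<^const>\<open>lambda2\<close> is the second entry of the sorted list of roots with multiplicity: \<open>0\<close> is a
  simple root, the Rayleigh minimum is a root, and no root lies strictly between them.\<close>
lemma lambda2_eq_rayleigh_minimum:
  assumes u: "rayleigh_minimizer n E u"
  shows "lambda2 n E = laplacian_form E u u"
proof -
  have sum_u: "(\<Sum>i<n. u i) = 0" and unit_u: "dotp n u u = 1"
    and min: "\<And>x. (\<Sum>i<n. x i) = 0 \<Longrightarrow> laplacian_form E u u * dotp n x x \<le> laplacian_form E x x"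
    using u by (auto simp: rayleigh_minimizer_def)
  let ?p = "char_poly (laplacian n E)" and ?\<mu> = "laplacian_form E u u"
  have p: "?p \<noteq> 0" using degree_monic_char_poly[OF laplacian_carrier] by auto
  have u_nonzero: "\<exists>i<n. u i \<noteq> 0"
    using unit_u dotp_self_eq_0_iff[of n u] by auto
  then have "0 < ?\<mu>" using sum_u by (rule laplacian_form_pos[rotated])
  moreover have "poly ?p ?\<mu> = 0"
    unfolding poly_char_poly_laplacian_eq_0_iff
    using u_nonzero laplacian_apply_rayleigh_minimizer[OF u] by blast
  moreover have "count (proots ?p) 0 = 1"
    using p order_0_char_poly_laplacian by (simp add: count_proots)
  moreover have "\<forall>r\<in>#proots ?p. r = 0 \<or> ?\<mu> \<le> r"
    using p laplacian_root_eq_0_or_ge[OF min] by simp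
  ultimately show ?thesis
    unfolding lambda2_def using p by (intro sorted_nth_1_eq) simp_all
qed

lemma lambda2_le_rayleigh:
  assumes "(\<Sum>i<n. x i) = 0"
  shows "lambda2 n E * dotp n x x \<le> laplacian_form E x x"
proof -
  obtain u where u: "rayleigh_minimizer n E u"
    using exists_rayleigh_minimizer ..
  then show ?thesis
    using assms by (simp add: lambda2_eq_rayleigh_minimum[OF u] rayleigh_minimizer_def)
qed

lemma lambda2_eigenvector:
  obtains u where "(\<Sum>i<n. u i) = 0" "norm2 n u = 1"
    "\<forall>i<n. laplacian_apply E u i = lambda2 n E * u i"
proof -
  obtain u where u: "rayleigh_minimizer n E u"
    using exists_rayleigh_minimizer ..
  show thesis
  proof (rule that)
    show "(\<Sum>i<n. u i) = 0" "norm2 n u = 1"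
      using u by (simp_all add: rayleigh_minimizer_def norm2_eq_sqrt_dotp)
    show "\<forall>i<n. laplacian_apply E u i = lambda2 n E * u i"
      using laplacian_apply_rayleigh_minimizer[OF u] lambda2_eq_rayleigh_minimum[OF u] by simp
  qed
qed

lemma lambda2_pos_le: "0 < lambda2 n E" "lambda2 n E \<le> 2 * card E"
proof -
  obtain u where u: "rayleigh_minimizer n E u"
    using exists_rayleigh_minimizer ..
  then have "(\<Sum>i<n. u i) = 0" "dotp n u u = 1"
    by (simp_all add: rayleigh_minimizer_def)
  moreover from this have "\<exists>i<n. u i \<noteq> 0"
    using dotp_self_eq_0_iff[of n u] by auto
  ultimately show "0 < lambda2 n E" "lambda2 n E \<le> 2 * card E"
    using laplacian_form_pos laplacian_form_le[of u]
    by (simp_all add: lambda2_eq_rayleigh_minimum[OF u])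
qed

end

section \<open>The averaging process\<close>

lemma expectation_square_le:
  fixes p :: "'a pmf" and f :: "'a \<Rightarrow> real"
  assumes "finite (set_pmf p)"
  shows "(measure_pmf.expectation p f)\<^sup>2 \<le> measure_pmf.expectation p (\<lambda>x. (f x)\<^sup>2)"
  using measure_pmf.variance_positive[of p f]
  by (simp add: measure_pmf.variance_eq integrable_measure_pmf_finite[OF assms])

lemma norm1_le_sqrt_norm2: "norm1 n x \<le> sqrt (real n) * norm2 n x"
  using L2_set_mult_ineq[of "\<lambda>_. 1" x "{..<n}"] by (simp add: norm1_def norm2_def L2_set_def)

lemma norm2_le_norm1: "norm2 n x \<le> norm1 n x"
  using L2_set_le_sum_abs[of x "{..<n}"] by (simp add: norm1_def norm2_def L2_set_def)

lemma norm2_sub_mean_le: "norm2 n (\<lambda>i. x i - mean_val n x) \<le> norm2 n x"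
proof -
  define m where "m = mean_val n x"
  have "(\<Sum>i<n. x i) = real n * m" by (simp add: m_def mean_val_def)
  moreover have "(\<Sum>i<n. (x i - m)\<^sup>2) = (\<Sum>i<n. (x i)\<^sup>2) - 2 * m * (\<Sum>i<n. x i) + real n * m\<^sup>2"
    by (simp add: power2_eq_square algebra_simps sum.distrib sum_subtractf sum_distrib_left)
  ultimately have "(\<Sum>i<n. (x i - m)\<^sup>2) = (\<Sum>i<n. (x i)\<^sup>2) - real n * m\<^sup>2"
    by (simp add: power2_eq_square)
  then show ?thesis
    unfolding norm2_def m_def[symmetric] by (simp add: real_sqrt_le_mono)
qed

context finite_simple_graph
begin

lemma sum_avg_step:
  assumes "e \<in> E"
  shows "(\<Sum>i<n. avg_step e v i) = (\<Sum>i<n. v i)"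
proof -
  obtain a b where e: "e = {a, b}" "a \<noteq> b" "a < n" "b < n" using assms by (rule edgeE)
  have "(\<Sum>i<n. avg_step e v i) = (\<Sum>i\<in>{..<n} - e. avg_step e v i) + (\<Sum>i\<in>e. avg_step e v i)"
    using e by (intro sum.subset_diff) auto
  also have "\<dots> = (\<Sum>i\<in>{..<n} - e. v i) + (\<Sum>i\<in>e. v i)"
    using e by (simp add: avg_step_def)
  also have "\<dots> = (\<Sum>i<n. v i)"
    using e by (intro sum.subset_diff[symmetric]) auto
  finally show ?thesis .
qed

lemma avg_step_sub_const: "e \<in> E \<Longrightarrow> avg_step e (\<lambda>i. v i - a) = (\<lambda>i. avg_step e v i - a)"
  by (elim edgeE) (auto simp: avg_step_def field_simps)

lemma dotp_avg_step:
  assumes "e \<in> E"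
  shows "dotp n (avg_step e x) (avg_step e x)
           = dotp n x x - (2 * (\<Sum>k\<in>e. x k * x k) - sum x e * sum x e) / 2"
proof -
  obtain a b where e: "e = {a, b}" "a \<noteq> b" "a < n" "b < n" using assms by (rule edgeE)
  have split: "(\<Sum>i<n. f i) = (\<Sum>i\<in>{..<n} - e. f i) + f a + f b" for f :: "nat \<Rightarrow> real"
    using e by (subst sum.subset_diff[of e]) auto
  have rest: "(\<Sum>i\<in>{..<n} - e. avg_step e x i * avg_step e x i) = (\<Sum>i\<in>{..<n} - e. x i * x i)"
    by (intro sum.cong) (auto simp: avg_step_def)
  have ab: "avg_step e x a = (x a + x b) / 2" "avg_step e x b = (x a + x b) / 2"
    using e by (auto simp: avg_step_def)
  show ?thesis
    unfolding dotp_def split[of "\<lambda>i. avg_step e x i * avg_step e x i"] split[of "\<lambda>i. x i * x i"] rest ab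
    by (simp add: e(1,2) field_simps)
qed

lemma sum_dotp_avg_step:
  "(\<Sum>e\<in>E. dotp n (avg_step e x) (avg_step e x)) = card E * dotp n x x - laplacian_form E x x / 2"
  by (simp add: dotp_avg_step laplacian_form_def sum_subtractf sum_divide_distrib[symmetric])

lemma sum_avg_step_at:
  fixes v :: "nat \<Rightarrow> real"
  shows "(\<Sum>e\<in>E. avg_step e v i) = card E * v i - laplacian_apply E v i / 2"
proof -
  have "(\<Sum>e\<in>E. avg_step e v i) = (\<Sum>e\<in>E. v i - (if i \<in> e then 2 * v i - sum v e else 0) / 2)"
    by (intro sum.cong) (auto simp: avg_step_def field_simps)
  also have "\<dots> = card E * v i - (\<Sum>e\<in>E. if i \<in> e then 2 * v i - sum v e else 0) / 2"
    by (simp add: sum_subtractf sum_divide_distrib)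
  also have "(\<Sum>e\<in>E. if i \<in> e then 2 * v i - sum v e else 0) = laplacian_apply E v i"
    by (simp add: laplacian_apply_def sum.inter_filter[OF finite_edges])
  finally show ?thesis .
qed

end

context connected_simple_graph
begin

abbreviation rate :: real where
  "rate \<equiv> 1 - lambda2 n E / (2 * real (card E))"

lemma rate_nonneg: "0 \<le> rate" and rate_le_1: "rate \<le> 1"
  using lambda2_pos_le card_edges_pos by (simp_all add: field_simps)

lemma finite_set_pmf_avg_process: "finite (set_pmf (avg_process E v0 t))"
  by (induction t) (simp_all add: set_bind_pmf set_pmf_of_set finite_edges edges_nonempty)

lemma integrable_avg_process [simp]: "integrable (measure_pmf (avg_process E v0 t)) (f :: _ \<Rightarrow> real)"
  by (rule integrable_measure_pmf_finite[OF finite_set_pmf_avg_process])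

lemma expectation_avg_process_Suc:
  "measure_pmf.expectation (avg_process E v0 (Suc t)) f
     = measure_pmf.expectation (avg_process E v0 t) (\<lambda>v. (\<Sum>e\<in>E. f (avg_step e v)) / real (card E))"
proof -
  let ?p = "avg_process E v0 t"
  have "measure_pmf.expectation (avg_process E v0 (Suc t)) f
      = (\<Sum>v\<in>set_pmf ?p. pmf ?p v *\<^sub>R
           measure_pmf.expectation (map_pmf (\<lambda>e. avg_step e v) (pmf_of_set E)) f)"
    unfolding avg_process.simps
    by (rule pmf_expectation_bind) (simp_all add: finite_set_pmf_avg_process finite_edges edges_nonempty)
  also have "\<dots> = (\<Sum>v\<in>set_pmf ?p. pmf ?p v *\<^sub>R ((\<Sum>e\<in>E. f (avg_step e v)) / card E))"
    by (simp add: integral_pmf_of_set[OF edges_nonempty finite_edges])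
  also have "\<dots> = measure_pmf.expectation ?p (\<lambda>v. (\<Sum>e\<in>E. f (avg_step e v)) / card E)"
    by (rule integral_measure_pmf[symmetric]) (simp_all add: finite_set_pmf_avg_process)
  finally show ?thesis .
qed

lemma sum_avg_process:
  "v \<in> set_pmf (avg_process E v0 t) \<Longrightarrow> (\<Sum>i<n. v i) = (\<Sum>i<n. v0 i)"
proof (induction t arbitrary: v)
  case (Suc t)
  then obtain w e where "w \<in> set_pmf (avg_process E v0 t)" "e \<in> E" "v = avg_step e w"
    by (auto simp: set_bind_pmf set_pmf_of_set finite_edges edges_nonempty)
  then show ?case using Suc.IH sum_avg_step by simp
qed simp

lemma expectation_sq_dev_avg_process_le:
  fixes v0 :: "nat \<Rightarrow> real"
  defines "dev \<equiv> \<lambda>v. dotp n (\<lambda>i. v i - mean_val n v0) (\<lambda>i. v i - mean_val n v0)"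
  shows "measure_pmf.expectation (avg_process E v0 t) dev \<le> rate ^ t * dev v0"
proof (induction t)
  case (Suc t)
  let ?p = "avg_process E v0 t" and ?a = "mean_val n v0"
  have "(\<Sum>e\<in>E. dev (avg_step e v)) / card E \<le> rate * dev v" if "v \<in> set_pmf ?p" for v
  proof -
    have "(\<Sum>i<n. v i - ?a) = 0"
      using sum_avg_process[OF that] two_le_n by (simp add: sum_subtractf mean_val_def)
    then have "lambda2 n E * dev v \<le> laplacian_form E (\<lambda>i. v i - ?a) (\<lambda>i. v i - ?a)"
      unfolding dev_def by (rule lambda2_le_rayleigh)
    moreover have "(\<Sum>e\<in>E. dev (avg_step e v))
        = card E * dev v - laplacian_form E (\<lambda>i. v i - ?a) (\<lambda>i. v i - ?a) / 2"
      unfolding dev_def using sum_dotp_avg_step[of "\<lambda>i. v i - ?a"]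
      by (simp add: avg_step_sub_const cong: sum.cong)
    ultimately show ?thesis
      using card_edges_pos by (simp add: field_simps)
  qed
  then have "measure_pmf.expectation (avg_process E v0 (Suc t)) dev
      \<le> measure_pmf.expectation ?p (\<lambda>v. rate * dev v)"
    unfolding expectation_avg_process_Suc by (intro integral_mono_AE) (simp_all add: AE_measure_pmf_iff)
  also have "\<dots> \<le> rate * (rate ^ t * dev v0)"
    using Suc.IH rate_nonneg by (simp add: mult_left_mono)
  finally show ?case by simp
qed simp

lemma exp_dev_le:
  "exp_dev n E v0 t \<le> sqrt rate ^ t * sqrt (real n) * norm2 n (\<lambda>i. v0 i - mean_val n v0)"
proof -
  let ?p = "avg_process E v0 t" and ?x = "\<lambda>v i. v i - mean_val n v0"
  have "exp_dev n E v0 t \<le> measure_pmf.expectation ?p (\<lambda>v. sqrt (real n) * norm2 n (?x v))"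
    unfolding exp_dev_def by (intro integral_mono_AE) (simp_all add: norm1_le_sqrt_norm2)
  also have "\<dots> = sqrt (real n) * measure_pmf.expectation ?p (\<lambda>v. norm2 n (?x v))"
    by simp
  also have "measure_pmf.expectation ?p (\<lambda>v. norm2 n (?x v)) \<le> sqrt rate ^ t * norm2 n (?x v0)"
  proof (rule power2_le_imp_le)
    have "(measure_pmf.expectation ?p (\<lambda>v. norm2 n (?x v)))\<^sup>2
            \<le> measure_pmf.expectation ?p (\<lambda>v. (norm2 n (?x v))\<^sup>2)"
      by (rule expectation_square_le[OF finite_set_pmf_avg_process])
    also have "\<dots> \<le> rate ^ t * (norm2 n (?x v0))\<^sup>2"
      using expectation_sq_dev_avg_process_le[of v0 t]
      by (simp add: norm2_eq_sqrt_dotp dotp_self_nonneg)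
    also have "\<dots> = (sqrt rate ^ t * norm2 n (?x v0))\<^sup>2"
      using rate_nonneg by (simp add: real_sqrt_power[symmetric] power_mult_distrib)
    finally show "(measure_pmf.expectation ?p (\<lambda>v. norm2 n (?x v)))\<^sup>2
                    \<le> (sqrt rate ^ t * norm2 n (?x v0))\<^sup>2" .
    show "0 \<le> sqrt rate ^ t * norm2 n (?x v0)"
      unfolding norm2_def using rate_nonneg by (intro mult_nonneg_nonneg) (simp_all add: sum_nonneg)
  qed
  finally show ?thesis
    by (simp add: mult_left_mono mult.assoc mult.left_commute)
qed

lemma expectation_laplacian_apply_avg_process:
  "measure_pmf.expectation (avg_process E v0 t) (\<lambda>v. laplacian_apply E v i)
     = laplacian_apply E (\<lambda>k. measure_pmf.expectation (avg_process E v0 t) (\<lambda>v. v k)) i"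
  unfolding laplacian_apply_def by simp

lemma expectation_avg_process_eigenvector:
  assumes eigen: "\<forall>i<n. laplacian_apply E u i = \<mu> * u i" and "i < n"
  shows "measure_pmf.expectation (avg_process E u t) (\<lambda>v. v i)
           = (1 - \<mu> / (2 * real (card E))) ^ t * u i"
proof -
  define c where "c = 1 - \<mu> / (2 * real (card E))"
  have "measure_pmf.expectation (avg_process E u t) (\<lambda>v. v i) = c ^ t * u i" if "i < n" for i
    using that
  proof (induction t arbitrary: i)
    case (Suc t)
    let ?p = "avg_process E u t"
    have step: "(\<lambda>v. (\<Sum>e\<in>E. avg_step e v i) / card E)
                = (\<lambda>v. v i - laplacian_apply E v i / (2 * real (card E)))"
      using card_edges_pos by (simp add: sum_avg_step_at field_simps)
    have "laplacian_apply E (\<lambda>k. measure_pmf.expectation ?p (\<lambda>v. v k)) i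
        = laplacian_apply E (\<lambda>k. c ^ t * u k) i"
      by (rule laplacian_apply_cong) (rule Suc.IH)
    then have "measure_pmf.expectation (avg_process E u (Suc t)) (\<lambda>v. v i)
        = c ^ t * u i - laplacian_apply E (\<lambda>k. c ^ t * u k) i / (2 * real (card E))"
      unfolding expectation_avg_process_Suc step
      by (simp add: expectation_laplacian_apply_avg_process Suc.IH[OF Suc.prems])
    also have "laplacian_apply E (\<lambda>k. c ^ t * u k) i = c ^ t * (\<mu> * u i)"
      using eigen Suc.prems by (simp add: laplacian_apply_scale)
    also have "c ^ t * u i - c ^ t * (\<mu> * u i) / (2 * real (card E))
        = c ^ t * u i * (1 - \<mu> / (2 * real (card E)))"
      by (simp add: algebra_simps)
    also have "\<dots> = c ^ Suc t * u i"
      unfolding c_def[symmetric] by simp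
    finally show ?case .
  qed simp
  then show ?thesis using assms(2) by (simp add: c_def)
qed

lemma exp_dev_eigenvector_ge:
  assumes "(\<Sum>i<n. u i) = 0" "norm2 n u = 1" "\<forall>i<n. laplacian_apply E u i = \<mu> * u i"
  shows "\<bar>1 - \<mu> / (2 * real (card E))\<bar> ^ t \<le> exp_dev n E u t"
proof -
  let ?p = "avg_process E u t" and ?c = "1 - \<mu> / (2 * real (card E))"
  have "\<bar>?c\<bar> ^ t \<le> \<bar>?c\<bar> ^ t * norm1 n u"
    using norm2_le_norm1[of n u] assms(2) by (simp add: mult_le_cancel_left1)
  also have "\<dots> = (\<Sum>i<n. \<bar>measure_pmf.expectation ?p (\<lambda>v. v i)\<bar>)"
    by (simp add: norm1_def sum_distrib_left expectation_avg_process_eigenvector[OF assms(3)]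
        abs_mult power_abs)
  also have "\<dots> \<le> (\<Sum>i<n. measure_pmf.expectation ?p (\<lambda>v. \<bar>v i\<bar>))"
    using integral_norm_bound[of "measure_pmf ?p" "\<lambda>v. v _"] by (intro sum_mono) simp
  also have "\<dots> = exp_dev n E u t"
    using assms(1) by (simp add: exp_dev_def norm1_def mean_val_def)
  finally show ?thesis .
qed

lemma bdd_above_exp_dev_sphere: "bdd_above ((\<lambda>w. exp_dev n E w t) ` {w. norm2 n w = 1})"
proof (rule bdd_aboveI2)
  fix w assume "w \<in> {w. norm2 n w = 1}"
  then have "norm2 n (\<lambda>i. w i - mean_val n w) \<le> 1"
    using norm2_sub_mean_le[of n w] by simp
  moreover have "sqrt rate ^ t \<le> 1"
    using rate_nonneg rate_le_1 by (simp add: power_le_one)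
  ultimately have "sqrt rate ^ t * sqrt (real n) * norm2 n (\<lambda>i. w i - mean_val n w) \<le> 1 * sqrt (real n) * 1"
    by (intro mult_mono) (simp_all add: norm2_def sum_nonneg)
  then show "exp_dev n E w t \<le> sqrt (real n)"
    using exp_dev_le[of w t] by simp
qed

end

theorem proposition9:
  fixes n :: nat and E :: "nat set set" and v0 :: "nat \<Rightarrow> real" and t :: nat
  assumes "n \<ge> 2" and "simple_graph n E" and "connected_graph n E"
  shows "exp_dev n E v0 t
           \<le> sqrt (1 - 1 / (2 * gamma n E)) ^ t * sqrt (real n)
               * norm2 n (\<lambda>i. v0 i - mean_val n v0)
         \<and> (SUP w \<in> {w. norm2 n w = 1}. exp_dev n E w t) \<ge> (1 - 1 / (2 * gamma n E)) ^ t"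
proof -
  interpret connected_simple_graph n E
    using assms by unfold_locales
  have rate: "1 - 1 / (2 * gamma n E) = rate"
    by (simp add: gamma_def)
  obtain u where u: "(\<Sum>i<n. u i) = 0" "norm2 n u = 1"
    "\<forall>i<n. laplacian_apply E u i = lambda2 n E * u i"
    by (rule lambda2_eigenvector)
  have "rate ^ t \<le> exp_dev n E u t"
    using exp_dev_eigenvector_ge[OF u] rate_nonneg by simp
  also have "\<dots> \<le> (SUP w \<in> {w. norm2 n w = 1}. exp_dev n E w t)"
    using u(2) by (intro cSUP_upper bdd_above_exp_dev_sphere) simp
  finally show ?thesis
    unfolding rate using exp_dev_le by simp
qed

end
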